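(* Let $H$ be a compactly generated locally compact group such that for every pair $(X,\alpha),(Y,\beta)$ in $\mathrm{Geom}(H)$ the orbital map $X\to Y$ is a rough similarity. Then: (1) if $K$ is a compact normal subgroup of $H$, then for every pair $(X,\alpha),(Y,\beta)$ in $\mathrm{Geom}(H/K)$ the orbital map $X\to Y$ is a rough similarity; (2) if $G$ is a locally compact group receiving an injective continuous homomorphism from $H$ with closed cocompact image, then for every pair $(X,\alpha),(Y,\beta)$ in $\mathrm{Geom}(G)$ the orbital map $X\to Y$ is a rough similarity.
   Context: For a locally compact compactly generated group $G$, $\mathrm{Geom}(G)$ is the collection of pairs $(X,\alpha)$ with $X$ a proper geodesic metric space and $\alpha\colon G\to\mathrm{Isom}(X)$ a continuous, proper, cocompact action. For $(X,\alpha),(Y,\beta)\in\mathrm{Geom}(G)$ and points $o_X\in X$, $o_Y\in Y$, the orbital map is the map $\alpha(\gamma)o_X\mapsto\beta(\gamma)o_Y$ ($\gamma\in G$), extended to a quasiisometry $X\to Y$ and considered up to bounded distance. A map $\phi$ is a rough similarity if there are $\lambda>0$, $c\ge0$ with $\lambda d(x,x')-c\le d(\phi x,\phi x')\le\lambda d(x,x')+c$ for all $x,x'$. *)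

theory Defs
  imports "HOL-Analysis.Analysis" "HOL-Algebra.Coset" "HOL-Algebra.Generated_Groups"
begin

definition topological_group :: "('g,'m) monoid_scheme \<Rightarrow> 'g topology \<Rightarrow> bool" where
  "topological_group G T \<longleftrightarrow> group G \<and> topspace T = carrier G \<and>
     continuous_map (prod_topology T T) T (\<lambda>(x,y). x \<otimes>\<^bsub>G\<^esub> y) \<and>
     continuous_map T T (\<lambda>x. inv\<^bsub>G\<^esub> x)"

definition lc_group :: "('g,'m) monoid_scheme \<Rightarrow> 'g topology \<Rightarrow> bool" where
  "lc_group G T \<longleftrightarrow> topological_group G T \<and> Hausdorff_space T \<and> locally_compact_space T"

definition compactly_generated :: "('g,'m) monoid_scheme \<Rightarrow> 'g topology \<Rightarrow> bool" where
  "compactly_generated G T \<longleftrightarrow>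
     (\<exists>S. S \<subseteq> carrier G \<and> compactin T S \<and> generate G S = carrier G)"

text \<open>For a normal subgroup this is the
  topology of the quotient group \<open>G Mod K\<close>.\<close>
definition coset_topology :: "('g,'m) monoid_scheme \<Rightarrow> 'g topology \<Rightarrow> 'g set \<Rightarrow> 'g set topology" where
  "coset_topology G T K = topology (\<lambda>U. U \<subseteq> rcosets\<^bsub>G\<^esub> K \<and> openin T (\<Union>U))"

definition proper_metric :: "'x set \<Rightarrow> ('x \<Rightarrow> 'x \<Rightarrow> real) \<Rightarrow> bool" where
  "proper_metric M d \<longleftrightarrow>
     (\<forall>x\<in>M. \<forall>r. compactin (Metric_space.mtopology M d) (Metric_space.mcball M d x r))"

definition geodesic_metric :: "'x set \<Rightarrow> ('x \<Rightarrow> 'x \<Rightarrow> real) \<Rightarrow> bool" where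
  "geodesic_metric M d \<longleftrightarrow>
     (\<forall>x\<in>M. \<forall>y\<in>M. \<exists>\<gamma>. \<gamma> \<in> {0..d x y} \<rightarrow> M \<and> \<gamma> 0 = x \<and> \<gamma> (d x y) = y \<and>
        (\<forall>s\<in>{0..d x y}. \<forall>t\<in>{0..d x y}. d (\<gamma> s) (\<gamma> t) = \<bar>s - t\<bar>))"

definition isometry_of :: "'x set \<Rightarrow> ('x \<Rightarrow> 'x \<Rightarrow> real) \<Rightarrow> ('x \<Rightarrow> 'x) \<Rightarrow> bool" where
  "isometry_of M d f \<longleftrightarrow> bij_betw f M M \<and> (\<forall>x\<in>M. \<forall>y\<in>M. d (f x) (f y) = d x y)"

text \<open>\<open>\<alpha>\<close> is a homomorphism \<open>G \<rightarrow> Isom(M,d)\<close> (maps compared on \<open>M\<close> only).\<close>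
definition isometric_action ::
  "('g,'m) monoid_scheme \<Rightarrow> 'x set \<Rightarrow> ('x \<Rightarrow> 'x \<Rightarrow> real) \<Rightarrow> ('g \<Rightarrow> 'x \<Rightarrow> 'x) \<Rightarrow> bool" where
  "isometric_action G M d \<alpha> \<longleftrightarrow>
     (\<forall>g\<in>carrier G. isometry_of M d (\<alpha> g)) \<and>
     (\<forall>x\<in>M. \<alpha> \<one>\<^bsub>G\<^esub> x = x) \<and>
     (\<forall>g\<in>carrier G. \<forall>h\<in>carrier G. \<forall>x\<in>M. \<alpha> (g \<otimes>\<^bsub>G\<^esub> h) x = \<alpha> g (\<alpha> h x))"

text \<open>The set \<open>Geom(G)\<close>: \<open>(M,d)\<close> proper geodesic metric space, \<open>\<alpha>\<close> a continuous, proper,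
  cocompact isometric action.\<close>
definition geom_action ::
  "('g,'m) monoid_scheme \<Rightarrow> 'g topology \<Rightarrow> 'x set \<Rightarrow> ('x \<Rightarrow> 'x \<Rightarrow> real) \<Rightarrow> ('g \<Rightarrow> 'x \<Rightarrow> 'x) \<Rightarrow> bool" where
  "geom_action G T M d \<alpha> \<longleftrightarrow>
     Metric_space M d \<and> proper_metric M d \<and> geodesic_metric M d \<and>
     isometric_action G M d \<alpha> \<and>
     continuous_map (prod_topology T (Metric_space.mtopology M d)) (Metric_space.mtopology M d)
        (\<lambda>(g,x). \<alpha> g x) \<and>
     (\<forall>C. C \<subseteq> M \<and> compactin (Metric_space.mtopology M d) C \<longrightarrow>
        compactin T (T closure_of {g\<in>carrier G. \<alpha> g ` C \<inter> C \<noteq> {}})) \<and>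
     (\<exists>C. C \<subseteq> M \<and> compactin (Metric_space.mtopology M d) C \<and> (\<Union>g\<in>carrier G. \<alpha> g ` C) = M)"

definition quasi_isometry ::
  "'x set \<Rightarrow> ('x \<Rightarrow> 'x \<Rightarrow> real) \<Rightarrow> 'y set \<Rightarrow> ('y \<Rightarrow> 'y \<Rightarrow> real) \<Rightarrow> ('x \<Rightarrow> 'y) \<Rightarrow> bool" where
  "quasi_isometry M d N e \<phi> \<longleftrightarrow> \<phi> \<in> M \<rightarrow> N \<and>
     (\<exists>L c. L \<ge> 1 \<and> c \<ge> 0 \<and>
        (\<forall>x\<in>M. \<forall>x'\<in>M. d x x' / L - c \<le> e (\<phi> x) (\<phi> x') \<and> e (\<phi> x) (\<phi> x') \<le> L * d x x' + c) \<and>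
        (\<forall>y\<in>N. \<exists>x\<in>M. e (\<phi> x) y \<le> c))"

definition rough_similarity ::
  "'x set \<Rightarrow> ('x \<Rightarrow> 'x \<Rightarrow> real) \<Rightarrow> 'y set \<Rightarrow> ('y \<Rightarrow> 'y \<Rightarrow> real) \<Rightarrow> ('x \<Rightarrow> 'y) \<Rightarrow> bool" where
  "rough_similarity M d N e \<phi> \<longleftrightarrow>
     (\<exists>lam c. lam > 0 \<and> c \<ge> 0 \<and>
        (\<forall>x\<in>M. \<forall>x'\<in>M. lam * d x x' - c \<le> e (\<phi> x) (\<phi> x') \<and> e (\<phi> x) (\<phi> x') \<le> lam * d x x' + c))"

text \<open>\<open>\<phi>\<close> is (a representative of) the orbital map \<open>\<alpha>(g) o \<mapsto> \<beta>(g) o'\<close>: a quasi-isometry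
  \<open>M \<rightarrow> N\<close> at bounded distance from it on the orbit.\<close>
definition orbital_map ::
  "('g,'m) monoid_scheme \<Rightarrow> 'x set \<Rightarrow> ('x \<Rightarrow> 'x \<Rightarrow> real) \<Rightarrow> ('g \<Rightarrow> 'x \<Rightarrow> 'x) \<Rightarrow> 'x \<Rightarrow>
     'y set \<Rightarrow> ('y \<Rightarrow> 'y \<Rightarrow> real) \<Rightarrow> ('g \<Rightarrow> 'y \<Rightarrow> 'y) \<Rightarrow> 'y \<Rightarrow> ('x \<Rightarrow> 'y) \<Rightarrow> bool" where
  "orbital_map G M d \<alpha> p N e \<beta> p' \<phi> \<longleftrightarrow> quasi_isometry M d N e \<phi> \<and>
     (\<exists>C. \<forall>g\<in>carrier G. e (\<phi> (\<alpha> g p)) (\<beta> g p') \<le> C)"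

definition orbital_maps_rough_similar ::
  "('g,'m) monoid_scheme \<Rightarrow> 'g topology \<Rightarrow> 'x itself \<Rightarrow> 'y itself \<Rightarrow> bool" where
  "orbital_maps_rough_similar G T (_::'x itself) (_::'y itself) \<longleftrightarrow>
     (\<forall>(M::'x set) d \<alpha> (N::'y set) e \<beta>.
        geom_action G T M d \<alpha> \<and> geom_action G T N e \<beta> \<longrightarrow>
        (\<forall>p\<in>M. \<forall>p'\<in>N. \<forall>\<phi>. orbital_map G M d \<alpha> p N e \<beta> p' \<phi> \<longrightarrow> rough_similarity M d N e \<phi>))"

end

theory Submission
  imports Defs
begin

(* Both statements follow from one transfer principle. Let f : H -> G be a continuous
   homomorphism such that preimages of compact sets lie in compact sets, and G = f(H) D for
   some compact D. Composing with f turns every geometric action of G into a geometric action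
   of H, and an orbital map between two G-spaces is also an orbital map for the composed
   H-actions; so rough similarity of orbital maps passes from H to G.

   The quotient map H -> H/K by a compact normal subgroup K has both properties. For a closed
   cocompact embedding f, cocompactness is the hypothesis and properness comes from Baire
   category: H is the union of the compact sets S^n of words of length n in a compact symmetric
   generating set S, so some f(S^n) has interior in the closed, hence locally compact, subgroup
   f(H). Finitely many translates of that piece cover f(H) \<inter> Q for a compact Q, and
   injectivity of f pulls them back to finitely many translates of S^n. *)

section \<open>Topological groups and the coset topology\<close>

lemma topological_group_is_group: "topological_group G T \<Longrightarrow> group G"
  by (simp add: topological_group_def)

lemma topological_group_topspace: "topological_group G T \<Longrightarrow> topspace T = carrier G"
  by (simp add: topological_group_def)

lemma continuous_map_group_mult:
  "topological_group G T \<Longrightarrow> continuous_map (prod_topology T T) T (\<lambda>(x,y). x \<otimes>\<^bsub>G\<^esub> y)"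
  by (simp add: topological_group_def)

lemma continuous_map_left_translation:
  assumes "topological_group G T" "g \<in> carrier G"
  shows "continuous_map T T (\<lambda>x. g \<otimes>\<^bsub>G\<^esub> x)"
proof -
  have "continuous_map T (prod_topology T T) (\<lambda>x. (g, x))"
    using assms by (simp add: continuous_map_pairwise o_def topological_group_topspace)
  then show ?thesis
    using continuous_map_compose[OF _ continuous_map_group_mult[OF assms(1)]] by (fastforce simp: o_def)
qed

lemma homeomorphic_map_left_translation:
  fixes G (structure)
  assumes tg: "topological_group G T" and g: "g \<in> carrier G"
  shows "homeomorphic_map T T (\<lambda>x. g \<otimes> x)"
proof -
  interpret group G using topological_group_is_group[OF tg] .
  have "homeomorphic_maps T T (\<lambda>x. g \<otimes> x) (\<lambda>x. inv g \<otimes> x)"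
    unfolding homeomorphic_maps_def
    using continuous_map_left_translation[OF tg] g topological_group_topspace[OF tg]
    by (simp add: m_assoc[symmetric])
  then show ?thesis by (rule homeomorphic_maps_imp_map)
qed

lemma l_coset_eq_image: "g <#\<^bsub>G\<^esub> A = (\<lambda>x. g \<otimes>\<^bsub>G\<^esub> x) ` A"
  by (auto simp: l_coset_def)

lemma openin_l_coset:
  assumes "topological_group G T" "g \<in> carrier G" "openin T U"
  shows "openin T (g <#\<^bsub>G\<^esub> U)"
  using homeomorphic_imp_open_map[OF homeomorphic_map_left_translation[OF assms(1,2)]] assms(3)
  by (simp add: open_map_def l_coset_eq_image)

lemma compactin_l_coset:
  assumes "topological_group G T" "g \<in> carrier G" "compactin T A"
  shows "compactin T (g <#\<^bsub>G\<^esub> A)"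
  unfolding l_coset_eq_image
  by (rule image_compactin[OF assms(3) continuous_map_left_translation[OF assms(1,2)]])

lemma compactin_set_mult:
  assumes "topological_group G T" "compactin T A" "compactin T B"
  shows "compactin T (A <#>\<^bsub>G\<^esub> B)"
proof -
  have "A <#>\<^bsub>G\<^esub> B = (\<lambda>(x,y). x \<otimes>\<^bsub>G\<^esub> y) ` (A \<times> B)"
    by (auto simp: set_mult_def)
  then show ?thesis
    using image_compactin[OF _ continuous_map_group_mult[OF assms(1)]] assms(2,3)
    by (simp add: compactin_Times)
qed

lemma openin_coset_topology:
  fixes G (structure)
  assumes "group G" "subgroup K G"
  shows "openin (coset_topology G T K) U \<longleftrightarrow> U \<subseteq> rcosets K \<and> openin T (\<Union>U)"
proof -
  interpret group G by fact
  have Int: "\<Union>(S \<inter> U) = \<Union>S \<inter> \<Union>U" if "S \<subseteq> rcosets K" "U \<subseteq> rcosets K" for S U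
  proof (intro equalityI subsetI)
    fix x assume "x \<in> \<Union>S \<inter> \<Union>U"
    then obtain A B where AB: "x \<in> A" "A \<in> S" "x \<in> B" "B \<in> U" by blast
    then have "A = B"
      using pairwiseD[OF rcos_disjoint[OF assms(2)]] that by (auto simp: disjnt_iff)
    then show "x \<in> \<Union>(S \<inter> U)" using AB by blast
  qed blast
  have Union: "\<Union>(\<Union>\<S>) = (\<Union>S\<in>\<S>. \<Union>S)" for \<S> :: "'a set set set"
    by blast
  have "istopology (\<lambda>U. U \<subseteq> rcosets K \<and> openin T (\<Union>U))"
    unfolding istopology_def
  proof (rule conjI; intro allI impI)
    fix S U assume "S \<subseteq> rcosets K \<and> openin T (\<Union>S)" "U \<subseteq> rcosets K \<and> openin T (\<Union>U)"
    then show "S \<inter> U \<subseteq> rcosets K \<and> openin T (\<Union>(S \<inter> U))"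
      by (simp add: Int openin_Int le_infI1)
  next
    fix \<S> assume "\<forall>S\<in>\<S>. S \<subseteq> rcosets K \<and> openin T (\<Union>S)"
    then show "\<Union>\<S> \<subseteq> rcosets K \<and> openin T (\<Union>(\<Union>\<S>))"
      unfolding Union by (auto intro: openin_Union)
  qed
  then show ?thesis
    unfolding coset_topology_def by simp
qed

lemma topspace_coset_topology:
  fixes G (structure)
  assumes "group G" "subgroup K G" "topspace T = carrier G"
  shows "topspace (coset_topology G T K) = rcosets K"
proof -
  have "\<Union>(rcosets K) = topspace T"
    using group.rcosets_part_G[OF assms(1,2)] assms(3) by simp
  then have "openin (coset_topology G T K) (rcosets K)"
    using openin_coset_topology[OF assms(1,2)] by simp
  moreover have "topspace (coset_topology G T K) \<subseteq> rcosets K"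
    using openin_topspace openin_coset_topology[OF assms(1,2)] by blast
  ultimately show ?thesis
    by (simp add: openin_subset subset_antisym)
qed

lemma continuous_map_coset_projection:
  fixes G (structure)
  assumes tg: "topological_group G T" and K: "subgroup K G"
  shows "continuous_map T (coset_topology G T K) (\<lambda>x. K #> x)"
  unfolding continuous_map_def
proof (intro conjI allI impI Pi_I)
  interpret group G using topological_group_is_group[OF tg] .
  note top = topological_group_topspace[OF tg] topspace_coset_topology[OF is_group K]
  show "K #> x \<in> topspace (coset_topology G T K)" if "x \<in> topspace T" for x
    using that top rcosetsI subgroup.subset[OF K] by auto
  fix U assume "openin (coset_topology G T K) U"
  then have U: "U \<subseteq> rcosets K" "openin T (\<Union>U)"
    using openin_coset_topology[OF is_group K] by auto
  have "{x \<in> topspace T. K #> x \<in> U} = \<Union>U"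
  proof (intro equalityI subsetI)
    fix x assume "x \<in> {x \<in> topspace T. K #> x \<in> U}"
    then show "x \<in> \<Union>U" using rcos_self[OF _ K] top by auto
  next
    fix x assume "x \<in> \<Union>U"
    then obtain a where a: "a \<in> carrier G" "K #> a \<in> U" "x \<in> K #> a"
      using U(1) by (auto simp: RCOSETS_def)
    then show "x \<in> {x \<in> topspace T. K #> x \<in> U}"
      using repr_independence[OF _ a(1) K] subgroup.elemrcos_carrier[OF K is_group] top by auto
  qed
  then show "openin T {x \<in> topspace T. K #> x \<in> U}" using U by simp
qed

lemma openin_coset_topology_image:
  fixes G (structure)
  assumes tg: "topological_group G T" and K: "subgroup K G" and U: "openin T U"
  shows "openin (coset_topology G T K) ((\<lambda>x. K #> x) ` U)"
proof -
  interpret group G using topological_group_is_group[OF tg] .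
  have "U \<subseteq> carrier G"
    using openin_subset[OF U] topological_group_topspace[OF tg] by simp
  then have "(\<lambda>x. K #> x) ` U \<subseteq> rcosets K"
    using rcosetsI subgroup.subset[OF K] by blast
  moreover have "\<Union>((\<lambda>x. K #> x) ` U) = (\<Union>k\<in>K. k <# U)"
    by (auto simp: r_coset_def l_coset_def)
  moreover have "openin T (\<Union>k\<in>K. k <# U)"
    using openin_l_coset[OF tg _ U] subgroup.subset[OF K] by blast
  ultimately show ?thesis
    using openin_coset_topology[OF is_group K] by simp
qed

lemma compactin_coset_topology_lift:
  fixes G (structure)
  assumes tg: "topological_group G T" and lc: "locally_compact_space T"
    and K: "subgroup K G" and Q: "compactin (coset_topology G T K) Q"
  obtains D where "compactin T D" "\<And>x. x \<in> carrier G \<Longrightarrow> K #> x \<in> Q \<Longrightarrow> x \<in> K <#> D"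
proof -
  interpret group G using topological_group_is_group[OF tg] .
  note top = topological_group_topspace[OF tg]
  obtain U C where UC: "\<And>x. x \<in> carrier G \<Longrightarrow>
      openin T (U x) \<and> compactin T (C x) \<and> x \<in> U x \<and> U x \<subseteq> C x"
    using lc top unfolding locally_compact_space_def by metis
  define \<U> where "\<U> = (\<lambda>x. (\<lambda>u. K #> u) ` U x) ` carrier G"
  have "Q \<subseteq> rcosets K"
    using compactin_subset_topspace[OF Q] topspace_coset_topology[OF is_group K top] by simp
  moreover have "K #> a \<in> \<Union>\<U>" if "a \<in> carrier G" for a
    using UC[OF that] that unfolding \<U>_def by blast
  ultimately have "Q \<subseteq> \<Union>\<U>"
    unfolding RCOSETS_def by blast
  moreover have "\<forall>B\<in>\<U>. openin (coset_topology G T K) B"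
    using openin_coset_topology_image[OF tg K] UC unfolding \<U>_def by blast
  ultimately obtain \<F> where F: "finite \<F>" "\<F> \<subseteq> \<U>" "Q \<subseteq> \<Union>\<F>"
    using Q unfolding compactin_def by meson
  then obtain X where X: "X \<subseteq> carrier G" "finite X" "\<F> = (\<lambda>x. (\<lambda>u. K #> u) ` U x) ` X"
    unfolding \<U>_def by (meson finite_subset_image)
  show ?thesis
  proof
    show "compactin T (\<Union>x\<in>X. C x)"
      using X UC by (intro compactin_Union) auto
  next
    fix x assume x: "x \<in> carrier G" "K #> x \<in> Q"
    then obtain y u where yu: "y \<in> X" "u \<in> U y" "K #> x = K #> u" using F X by auto
    then have "x \<in> K #> u" using rcos_self[OF x(1) K] by simp
    then obtain k where "k \<in> K" "x = k \<otimes> u" unfolding r_coset_def by blast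
    moreover have "u \<in> (\<Union>x\<in>X. C x)" using yu UC X by blast
    ultimately show "x \<in> K <#> (\<Union>x\<in>X. C x)"
      unfolding set_mult_def by blast
  qed
qed

section \<open>Pulling back geometric actions\<close>

definition relatively_compact_preimages :: "'a set \<Rightarrow> 'a topology \<Rightarrow> 'b topology \<Rightarrow> ('a \<Rightarrow> 'b) \<Rightarrow> bool" where
  "relatively_compact_preimages A X Y f \<longleftrightarrow>
     (\<forall>Q. compactin Y Q \<longrightarrow> (\<exists>E. compactin X E \<and> {x \<in> A. f x \<in> Q} \<subseteq> E))"

definition cocompact_image ::
  "('h,'a) monoid_scheme \<Rightarrow> ('g,'b) monoid_scheme \<Rightarrow> 'g topology \<Rightarrow> ('h \<Rightarrow> 'g) \<Rightarrow> bool" where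
  "cocompact_image H G TG f \<longleftrightarrow> (\<exists>D. compactin TG D \<and> carrier G \<subseteq> f ` carrier H <#>\<^bsub>G\<^esub> D)"

lemma compactin_closure_of_preimage:
  assumes "Hausdorff_space X" "relatively_compact_preimages A X Y f"
    and "compactin Y (Y closure_of S)" "S \<subseteq> topspace Y"
  shows "compactin X (X closure_of {x \<in> A. f x \<in> S})"
proof -
  obtain E where E: "compactin X E" "{x \<in> A. f x \<in> Y closure_of S} \<subseteq> E"
    using assms(2,3) unfolding relatively_compact_preimages_def by blast
  then have "{x \<in> A. f x \<in> S} \<subseteq> E"
    using closure_of_subset[OF assms(4)] by blast
  then have "X closure_of {x \<in> A. f x \<in> S} \<subseteq> E"
    using closure_of_minimal compactin_imp_closedin[OF assms(1) E(1)] by blast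
  then show ?thesis
    using closed_compactin[OF E(1)] by simp
qed

lemma isometric_action_pullback:
  assumes "isometric_action G M d \<alpha>" "f \<in> hom H G" "group H" "group G"
  shows "isometric_action H M d (\<lambda>h. \<alpha> (f h))"
  using assms hom_one[OF assms(2-4)] unfolding isometric_action_def hom_def by (auto simp: Pi_iff)

lemma cocompact_action_pullback:
  fixes G (structure)
  assumes act: "isometric_action G M d \<alpha>"
    and cont: "continuous_map (prod_topology TG X) X (\<lambda>(g,x). \<alpha> g x)"
    and top: "topspace TG = carrier G"
    and f: "f \<in> carrier H \<rightarrow> carrier G" "cocompact_image H G TG f"
    and C: "C \<subseteq> M" "compactin X C" "(\<Union>g\<in>carrier G. \<alpha> g ` C) = M"
  obtains C' where "C' \<subseteq> M" "compactin X C'" "(\<Union>h\<in>carrier H. \<alpha> (f h) ` C') = M"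
proof -
  obtain D where D: "compactin TG D" "carrier G \<subseteq> f ` carrier H <#> D"
    using f(2) unfolding cocompact_image_def by blast
  have Dc: "D \<subseteq> carrier G"
    using compactin_subset_topspace[OF D(1)] top by simp
  have inM: "\<alpha> g x \<in> M" if "g \<in> carrier G" "x \<in> M" for g x
    using act that unfolding isometric_action_def isometry_of_def bij_betw_def by auto
  have mult: "\<alpha> (g \<otimes> g') x = \<alpha> g (\<alpha> g' x)" if "g \<in> carrier G" "g' \<in> carrier G" "x \<in> M" for g g' x
    using act that unfolding isometric_action_def by blast
  define C' where "C' = (\<lambda>(g,x). \<alpha> g x) ` (D \<times> C)"
  show ?thesis
  proof
    show "compactin X C'"
      unfolding C'_def using image_compactin[OF _ cont] D(1) C(2) by (simp add: compactin_Times)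
    show "C' \<subseteq> M"
      unfolding C'_def using Dc C(1) inM by auto
    show "(\<Union>h\<in>carrier H. \<alpha> (f h) ` C') = M"
    proof (intro equalityI subsetI)
      fix y assume "y \<in> (\<Union>h\<in>carrier H. \<alpha> (f h) ` C')"
      then show "y \<in> M"
        using \<open>C' \<subseteq> M\<close> inM f(1) by blast
    next
      fix y assume "y \<in> M"
      then obtain g x where gx: "g \<in> carrier G" "x \<in> C" "y = \<alpha> g x"
        using C(3) by blast
      then obtain h e where he: "h \<in> carrier H" "e \<in> D" "g = f h \<otimes> e"
        using D(2) unfolding set_mult_def by blast
      then have "y = \<alpha> (f h) (\<alpha> e x)"
        using mult f(1) Dc C(1) gx by blast
      moreover have "\<alpha> e x \<in> C'"
        unfolding C'_def using he gx by blast
      ultimately show "y \<in> (\<Union>h\<in>carrier H. \<alpha> (f h) ` C')"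
        using he(1) by blast
    qed
  qed
qed

lemma geom_action_pullback:
  assumes ga: "geom_action G TG M d \<alpha>"
    and groups: "group H" "group G" and top: "topspace TG = carrier G"
    and hausH: "Hausdorff_space TH"
    and f: "f \<in> hom H G" "continuous_map TH TG f"
    and proper: "relatively_compact_preimages (carrier H) TH TG f"
    and cocompact: "cocompact_image H G TG f"
  shows "geom_action H TH M d (\<lambda>h. \<alpha> (f h))"
proof -
  let ?X = "Metric_space.mtopology M d"
  have metric: "Metric_space M d" "proper_metric M d" "geodesic_metric M d"
    and act: "isometric_action G M d \<alpha>"
    and cont: "continuous_map (prod_topology TG ?X) ?X (\<lambda>(g,x). \<alpha> g x)"
    and proper_act: "\<And>C. C \<subseteq> M \<Longrightarrow> compactin ?X C \<Longrightarrow>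
        compactin TG (TG closure_of {g\<in>carrier G. \<alpha> g ` C \<inter> C \<noteq> {}})"
    and cc: "\<exists>C. C \<subseteq> M \<and> compactin ?X C \<and> (\<Union>g\<in>carrier G. \<alpha> g ` C) = M"
    using ga unfolding geom_action_def by auto
  have fc: "f \<in> carrier H \<rightarrow> carrier G"
    using f(1) by (simp add: hom_def)
  have "continuous_map (prod_topology TH ?X) (prod_topology TG ?X) (\<lambda>(h,x). (f h, id x))"
    using continuous_map_prod_top f(2) by (metis continuous_map_id)
  from continuous_map_compose[OF this cont]
  have "continuous_map (prod_topology TH ?X) ?X (\<lambda>(h,x). \<alpha> (f h) x)"
    by (simp add: o_def case_prod_beta')
  moreover have "\<forall>C. C \<subseteq> M \<and> compactin ?X C \<longrightarrow>
      compactin TH (TH closure_of {h\<in>carrier H. \<alpha> (f h) ` C \<inter> C \<noteq> {}})"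
  proof (intro allI impI, elim conjE)
    fix C assume C: "C \<subseteq> M" "compactin ?X C"
    have "{h\<in>carrier H. \<alpha> (f h) ` C \<inter> C \<noteq> {}} =
        {h\<in>carrier H. f h \<in> {g\<in>carrier G. \<alpha> g ` C \<inter> C \<noteq> {}}}"
      using fc by blast
    then show "compactin TH (TH closure_of {h\<in>carrier H. \<alpha> (f h) ` C \<inter> C \<noteq> {}})"
      using compactin_closure_of_preimage[OF hausH proper proper_act[OF C]] top by simp
  qed
  moreover have "\<exists>C. C \<subseteq> M \<and> compactin ?X C \<and> (\<Union>h\<in>carrier H. \<alpha> (f h) ` C) = M"
    using cc cocompact_action_pullback[OF act cont top fc cocompact] by metis
  ultimately show ?thesis
    unfolding geom_action_def using metric isometric_action_pullback[OF act f(1) groups] by blast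
qed

lemma orbital_map_pullback:
  assumes "orbital_map G M d \<alpha> p N e \<beta> p' \<phi>" "f \<in> carrier H \<rightarrow> carrier G"
  shows "orbital_map H M d (\<lambda>h. \<alpha> (f h)) p N e (\<lambda>h. \<beta> (f h)) p' \<phi>"
  using assms unfolding orbital_map_def by (meson Pi_iff)

lemma orbital_maps_rough_similar_transfer:
  fixes H :: "('h,'a) monoid_scheme" and G :: "('g,'b) monoid_scheme"
  assumes hyp: "orbital_maps_rough_similar H TH TYPE('x) TYPE('y)"
    and groups: "group H" "group G" and top: "topspace TG = carrier G"
    and hausH: "Hausdorff_space TH"
    and f: "f \<in> hom H G" "continuous_map TH TG f"
    and proper: "relatively_compact_preimages (carrier H) TH TG f"
    and cocompact: "cocompact_image H G TG f"
  shows "orbital_maps_rough_similar G TG TYPE('x) TYPE('y)"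
  unfolding orbital_maps_rough_similar_def
proof (intro allI impI ballI)
  fix M :: "'x set" and d \<alpha> and N :: "'y set" and e \<beta> p p' \<phi>
  assume "geom_action G TG M d \<alpha> \<and> geom_action G TG N e \<beta>"
    and p: "p \<in> M" "p' \<in> N" and orb: "orbital_map G M d \<alpha> p N e \<beta> p' \<phi>"
  then have "geom_action H TH M d (\<lambda>h. \<alpha> (f h))" "geom_action H TH N e (\<lambda>h. \<beta> (f h))"
    using geom_action_pullback[OF _ groups top hausH f proper cocompact] by blast+
  moreover have "orbital_map H M d (\<lambda>h. \<alpha> (f h)) p N e (\<lambda>h. \<beta> (f h)) p' \<phi>"
    using orbital_map_pullback[OF orb] f(1) unfolding hom_def by blast
  ultimately show "rough_similarity M d N e \<phi>"
    using hyp p unfolding orbital_maps_rough_similar_def by blast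
qed

section \<open>Quotients by compact normal subgroups\<close>

lemma relatively_compact_preimages_coset_projection:
  fixes G (structure)
  assumes tg: "topological_group G T" and lc: "locally_compact_space T"
    and K: "subgroup K G" "compactin T K"
  shows "relatively_compact_preimages (carrier G) T (coset_topology G T K) (\<lambda>x. K #> x)"
  unfolding relatively_compact_preimages_def
proof (intro allI impI)
  fix Q assume "compactin (coset_topology G T K) Q"
  then obtain D where D: "compactin T D" "\<And>x. x \<in> carrier G \<Longrightarrow> K #> x \<in> Q \<Longrightarrow> x \<in> K <#> D"
    using compactin_coset_topology_lift[OF tg lc K(1)] by blast
  then show "\<exists>E. compactin T E \<and> {x \<in> carrier G. K #> x \<in> Q} \<subseteq> E"
    using compactin_set_mult[OF tg K(2) D(1)] by blast
qed

lemma cocompact_image_surjective: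
  assumes "group G" "f ` carrier H = carrier G" "topspace TG = carrier G"
  shows "cocompact_image H G TG f"
proof -
  have "carrier G \<subseteq> carrier G <#>\<^bsub>G\<^esub> {\<one>\<^bsub>G\<^esub>}"
    using group.coset_mult_one[OF assms(1)] by (simp flip: r_coset_eq_set_mult)
  then show ?thesis
    unfolding cocompact_image_def using assms group.is_monoid monoid.one_closed
    by (metis compactin_sing)
qed

theorem orbital_maps_rough_similar_quotient:
  fixes H :: "('h,'a) monoid_scheme"
  assumes lcg: "lc_group H TH" and hyp: "orbital_maps_rough_similar H TH TYPE('x) TYPE('y)"
    and K: "compactin TH K" "K \<lhd> H"
  shows "orbital_maps_rough_similar (H Mod K) (coset_topology H TH K) TYPE('x) TYPE('y)"
proof -
  interpret normal K H by (rule K(2))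
  have tg: "topological_group H TH" and haus: "Hausdorff_space TH" and lc: "locally_compact_space TH"
    using lcg unfolding lc_group_def by auto
  have top: "topspace (coset_topology H TH K) = carrier (H Mod K)"
    using topspace_coset_topology[OF is_group is_subgroup topological_group_topspace[OF tg]]
    by (simp add: FactGroup_def)
  show ?thesis
  proof (rule orbital_maps_rough_similar_transfer[OF hyp is_group factorgroup_is_group top haus
        r_coset_hom_Mod continuous_map_coset_projection[OF tg is_subgroup]])
    show "relatively_compact_preimages (carrier H) TH (coset_topology H TH K) (\<lambda>x. K #>\<^bsub>H\<^esub> x)"
      by (rule relatively_compact_preimages_coset_projection[OF tg lc is_subgroup K(1)])
    show "cocompact_image H (H Mod K) (coset_topology H TH K) (\<lambda>x. K #>\<^bsub>H\<^esub> x)"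
      by (rule cocompact_image_surjective[OF factorgroup_is_group _ top])
        (simp add: carrier_FactGroup)
  qed
qed

section \<open>Closed cocompact embeddings\<close>

primrec set_power :: "('a,'b) monoid_scheme \<Rightarrow> 'a set \<Rightarrow> nat \<Rightarrow> 'a set" where
  "set_power G A 0 = {\<one>\<^bsub>G\<^esub>}"
| "set_power G A (Suc n) = set_power G A n <#>\<^bsub>G\<^esub> A"

lemma (in monoid) set_power_subset_carrier: "A \<subseteq> carrier G \<Longrightarrow> set_power G A n \<subseteq> carrier G"
  by (induction n) (auto simp: set_mult_def)

lemma (in monoid) set_power_mult:
  assumes A: "A \<subseteq> carrier G" and x: "x \<in> set_power G A n"
  shows "y \<in> set_power G A m \<Longrightarrow> x \<otimes> y \<in> set_power G A (n + m)"
proof (induction m arbitrary: y)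
  case 0
  have "x \<in> carrier G" using set_power_subset_carrier[OF A] x by blast
  then show ?case using 0 x by simp
next
  case (Suc m)
  then obtain y' a where y: "y' \<in> set_power G A m" "a \<in> A" "y = y' \<otimes> a"
    by (auto simp: set_mult_def)
  have "x \<in> carrier G" "y' \<in> carrier G" "a \<in> carrier G"
    using y x A set_power_subset_carrier[OF A] by blast+
  then have "x \<otimes> y = (x \<otimes> y') \<otimes> a"
    using y(3) by (simp add: m_assoc)
  then show ?case
    using Suc.IH[OF y(1)] y(2) by (auto simp: set_mult_def)
qed

lemma compactin_set_power:
  assumes "topological_group G T" "compactin T A"
  shows "compactin T (set_power G A n)"
proof (induction n)
  case 0
  have "\<one>\<^bsub>G\<^esub> \<in> topspace T"
    using topological_group_topspace[OF assms(1)] topological_group_is_group[OF assms(1)]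
    by (simp add: group.is_monoid monoid.one_closed)
  then show ?case by simp
next
  case (Suc n)
  then show ?case using compactin_set_mult[OF assms(1) Suc assms(2)] by simp
qed

lemma (in group) generate_subset_set_power:
  assumes "S \<subseteq> carrier G"
  shows "generate G S \<subseteq> (\<Union>n. set_power G (S \<union> m_inv G ` S) n)"
proof
  let ?A = "S \<union> m_inv G ` S"
  have A: "?A \<subseteq> carrier G" using assms by auto
  have one: "set_power G ?A 1 = ?A"
    using lcos_mult_one[OF A] by (simp add: l_coset_eq_set_mult)
  fix x assume "x \<in> generate G S"
  then show "x \<in> (\<Union>n. set_power G ?A n)"
  proof induction
    case one
    have "\<one> \<in> set_power G ?A 0" by simp
    then show ?case by (rule UN_I[rotated]) simp
  next
    case (incl h)
    then have "h \<in> set_power G ?A 1" unfolding one by blast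
    then show ?case by (rule UN_I[rotated]) simp
  next
    case (inv h)
    then have "inv h \<in> set_power G ?A 1" unfolding one by blast
    then show ?case by (rule UN_I[rotated]) simp
  next
    case (eng h1 h2)
    then obtain n m where "h1 \<in> set_power G ?A n" "h2 \<in> set_power G ?A m" by blast
    then have "h1 \<otimes> h2 \<in> set_power G ?A (n + m)" by (rule set_power_mult[OF A])
    then show ?case by (rule UN_I[rotated]) simp
  qed
qed

lemma compactly_generated_exhaustion:
  fixes G (structure)
  assumes tg: "topological_group G T" and cg: "compactly_generated G T"
  obtains P where "\<And>n::nat. compactin T (P n)" "carrier G = (\<Union>n. P n)"
proof -
  interpret group G using topological_group_is_group[OF tg] .
  obtain S where S: "S \<subseteq> carrier G" "compactin T S" "generate G S = carrier G"
    using cg unfolding compactly_generated_def by blast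
  have "continuous_map T T (\<lambda>x. inv x)"
    using tg unfolding topological_group_def by blast
  then have "compactin T (S \<union> m_inv G ` S)"
    using S(2) by (intro compactin_Un image_compactin)
  moreover have "S \<union> m_inv G ` S \<subseteq> carrier G"
    using S(1) by auto
  then have "carrier G = (\<Union>n. set_power G (S \<union> m_inv G ` S) n)"
    using generate_subset_set_power[OF S(1)] S(3) set_power_subset_carrier
    by (intro equalityI) blast+
  ultimately show ?thesis
    using that compactin_set_power[OF tg] by blast
qed

lemma Baire_compact_exhaustion:
  assumes "locally_compact_space X" "Hausdorff_space X" "topspace X \<noteq> {}"
    and "\<And>n::nat. compactin X (A n)" "topspace X = (\<Union>n. A n)"
  obtains n where "X interior_of A n \<noteq> {}"
proof -
  have "\<exists>n. X interior_of A n \<noteq> {}"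
  proof (rule ccontr)
    assume "\<nexists>n. X interior_of A n \<noteq> {}"
    moreover have "closedin X (A n)" for n
      using compactin_imp_closedin[OF assms(2,4)] .
    ultimately have "X interior_of \<Union>(range A) = {}"
      using assms(1,2) locally_compact_Hausdorff_or_regular
      by (intro Baire_category_alt) auto
    then show False
      using assms(3,5) interior_of_topspace by metis
  qed
  then show ?thesis using that by blast
qed

lemma closedin_compact_exhaustion_interior:
  assumes lc: "locally_compact_space X" and haus: "Hausdorff_space X"
    and F: "closedin X F" "F \<noteq> {}"
    and A: "\<And>n::nat. compactin X (A n)" "F = (\<Union>n. A n)"
  obtains n W where "openin X W" "W \<inter> F \<noteq> {}" "W \<inter> F \<subseteq> A n"
proof -
  let ?Y = "subtopology X F"
  have top: "topspace ?Y = F"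
    using closedin_subset[OF F(1)] by auto
  have "compactin ?Y (A n)" for n
    using A by (auto simp: compactin_subtopology)
  then obtain n where n: "?Y interior_of A n \<noteq> {}"
    using Baire_compact_exhaustion[of ?Y A] locally_compact_space_closed_subset[OF lc F(1)]
      Hausdorff_space_subtopology[OF haus] top F(2) A(2) by blast
  obtain W where W: "openin X W" "?Y interior_of A n = W \<inter> F"
    using openin_subtopology openin_interior_of by metis
  then show ?thesis
    using that n interior_of_subset by metis
qed

lemma (in group_hom) l_coset_Int_image_subset:
  assumes P: "P \<subseteq> carrier G" and p: "p \<in> carrier G"
    and W: "W \<subseteq> carrier H" "W \<inter> h ` carrier G \<subseteq> h ` P"
  shows "(inv\<^bsub>H\<^esub> h p <#\<^bsub>H\<^esub> W) \<inter> h ` carrier G \<subseteq> h ` (inv p <# P)"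
proof
  fix u assume "u \<in> (inv\<^bsub>H\<^esub> h p <#\<^bsub>H\<^esub> W) \<inter> h ` carrier G"
  then obtain w x where wx: "w \<in> W" "u = inv\<^bsub>H\<^esub> h p \<otimes>\<^bsub>H\<^esub> w" "x \<in> carrier G" "u = h x"
    unfolding l_coset_eq_image by blast
  have "w \<in> carrier H" using wx(1) W(1) by blast
  then have "w = h (p \<otimes> x)"
    using H.inv_solve_left[of u "h p" w] wx p by simp
  then obtain q where q: "q \<in> P" "w = h q"
    using W(2) wx(1) p wx(3) by blast
  moreover have "q \<in> carrier G"
    using q(1) P by blast
  ultimately have "u = h (inv p \<otimes> q)"
    using wx(2) p by simp
  then show "u \<in> h ` (inv p <# P)"
    unfolding l_coset_eq_image using q(1) by blast
qed

lemma (in group_hom) inj_on_preimage_l_coset_subset: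
  assumes inj: "inj_on h (carrier G)" and P: "P \<subseteq> carrier G" and a: "a \<in> carrier G"
    and U: "U \<subseteq> carrier H" "U \<inter> h ` carrier G \<subseteq> h ` P"
  shows "{x \<in> carrier G. h x \<in> h a <#\<^bsub>H\<^esub> U} \<subseteq> a <# P"
proof
  fix x assume "x \<in> {x \<in> carrier G. h x \<in> h a <#\<^bsub>H\<^esub> U}"
  then obtain u where x: "x \<in> carrier G" and u: "u \<in> U" "h x = h a \<otimes>\<^bsub>H\<^esub> u"
    unfolding l_coset_eq_image by blast
  have "u \<in> carrier H" using u(1) U(1) by blast
  then have "u = h (inv a \<otimes> x)"
    using H.inv_solve_left[of u "h a" "h x"] u(2) a x by simp
  then obtain p where p: "p \<in> P" "h (inv a \<otimes> x) = h p"
    using U(2) u(1) a x by blast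
  moreover have "p \<in> carrier G"
    using p(1) P by blast
  ultimately have "inv a \<otimes> x = p"
    using inj_onD[OF inj] a x by simp
  then have "x = a \<otimes> p"
    using G.inv_solve_left a x \<open>p \<in> carrier G\<close> by blast
  then show "x \<in> a <# P"
    unfolding l_coset_eq_image using p(1) by blast
qed

lemma compact_image_covers_identity_neighbourhood:
  fixes H :: "('h,'a) monoid_scheme" (structure) and G :: "('g,'b) monoid_scheme"
  assumes tgH: "topological_group H TH" and cg: "compactly_generated H TH"
    and lcG: "lc_group G TG" and f: "f \<in> hom H G" "continuous_map TH TG f"
    and closed: "closedin TG (f ` carrier H)"
  obtains P U where "compactin TH P" "P \<subseteq> carrier H" "openin TG U" "\<one>\<^bsub>G\<^esub> \<in> U"
    "U \<inter> f ` carrier H \<subseteq> f ` P"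
proof -
  have tgG: "topological_group G TG" and lc: "locally_compact_space TG" and haus: "Hausdorff_space TG"
    using lcG unfolding lc_group_def by auto
  interpret H: group H using topological_group_is_group[OF tgH] .
  interpret G: group G using topological_group_is_group[OF tgG] .
  interpret f: group_hom H G f
    using f(1) by (simp add: group_hom_def group_hom_axioms_def H.is_group G.is_group)
  obtain Q where Q: "\<And>n::nat. compactin TH (Q n)" "carrier H = (\<Union>n. Q n)"
    using compactly_generated_exhaustion[OF tgH cg] by metis
  have Qc: "Q n \<subseteq> carrier H" for n
    unfolding Q(2) by (rule UN_upper) simp
  have "f ` carrier H \<noteq> {}"
    using H.one_closed by blast
  moreover have "f ` carrier H = (\<Union>n. f ` Q n)"
    unfolding Q(2) by (rule image_UN)
  ultimately obtain n W where W: "openin TG W" "W \<inter> f ` carrier H \<noteq> {}" "W \<inter> f ` carrier H \<subseteq> f ` Q n"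
    by (rule closedin_compact_exhaustion_interior[OF lc haus closed _ image_compactin[OF Q(1) f(2)]])
  then obtain w where "w \<in> W" "w \<in> f ` Q n"
    by blast
  then obtain p where p: "p \<in> Q n" "f p \<in> W"
    by blast
  have pc: "p \<in> carrier H" using p(1) Qc by blast
  show ?thesis
  proof
    show "compactin TH (inv p <# Q n)"
      using compactin_l_coset[OF tgH _ Q(1)] pc by simp
    show "inv p <# Q n \<subseteq> carrier H"
      using H.l_coset_subset_G[OF Qc] pc by simp
    show "openin TG (inv\<^bsub>G\<^esub> f p <#\<^bsub>G\<^esub> W)"
      using openin_l_coset[OF tgG _ W(1)] pc by simp
    show "\<one>\<^bsub>G\<^esub> \<in> inv\<^bsub>G\<^esub> f p <#\<^bsub>G\<^esub> W"
      unfolding l_coset_eq_image using p(2) pc by (intro image_eqI[where x = "f p"]) simp_all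
    show "(inv\<^bsub>G\<^esub> f p <#\<^bsub>G\<^esub> W) \<inter> f ` carrier H \<subseteq> f ` (inv p <# Q n)"
      using f.l_coset_Int_image_subset[OF Qc pc _ W(3)] openin_subset[OF W(1)]
        topological_group_topspace[OF tgG] by simp
  qed
qed

lemma compactin_finite_l_coset_cover:
  fixes G (structure)
  assumes tg: "topological_group G T" and A: "compactin T A"
    and U: "openin T U" "\<one> \<in> U"
  obtains Y where "finite Y" "Y \<subseteq> A" "A \<subseteq> (\<Union>y\<in>Y. y <# U)"
proof -
  interpret group G using topological_group_is_group[OF tg] .
  have Ac: "A \<subseteq> carrier G"
    using compactin_subset_topspace[OF A] topological_group_topspace[OF tg] by simp
  have "\<forall>B\<in>(\<lambda>y. y <# U) ` A. openin T B"
    using openin_l_coset[OF tg _ U(1)] Ac by blast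
  moreover have "A \<subseteq> \<Union>((\<lambda>y. y <# U) ` A)"
    using U(2) Ac by (force simp: l_coset_def)
  ultimately obtain \<F> where "finite \<F>" "\<F> \<subseteq> (\<lambda>y. y <# U) ` A" "A \<subseteq> \<Union>\<F>"
    using A unfolding compactin_def by meson
  then show ?thesis
    using that by (metis finite_subset_image)
qed

lemma relatively_compact_preimages_closed_embedding:
  fixes H :: "('h,'a) monoid_scheme" (structure) and G :: "('g,'b) monoid_scheme"
  assumes tgH: "topological_group H TH" and cg: "compactly_generated H TH"
    and lcG: "lc_group G TG" and f: "f \<in> hom H G" "continuous_map TH TG f"
    and inj: "inj_on f (carrier H)" and closed: "closedin TG (f ` carrier H)"
  shows "relatively_compact_preimages (carrier H) TH TG f"
  unfolding relatively_compact_preimages_def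
proof (intro allI impI)
  fix Q assume Q: "compactin TG Q"
  have tgG: "topological_group G TG"
    using lcG unfolding lc_group_def by blast
  interpret H: group H using topological_group_is_group[OF tgH] .
  interpret G: group G using topological_group_is_group[OF tgG] .
  interpret f: group_hom H G f
    using f(1) by (simp add: group_hom_def group_hom_axioms_def H.is_group G.is_group)
  obtain P U where PU: "compactin TH P" "P \<subseteq> carrier H" "openin TG U" "\<one>\<^bsub>G\<^esub> \<in> U"
      "U \<inter> f ` carrier H \<subseteq> f ` P"
    using compact_image_covers_identity_neighbourhood[OF tgH cg lcG f closed] by blast
  obtain Y where Y: "finite Y" "Y \<subseteq> f ` carrier H \<inter> Q" "f ` carrier H \<inter> Q \<subseteq> (\<Union>y\<in>Y. y <#\<^bsub>G\<^esub> U)"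
    using compactin_finite_l_coset_cover[OF tgG closed_Int_compactin[OF closed Q] PU(3,4)] by blast
  define g where "g = inv_into (carrier H) f"
  have g: "g y \<in> carrier H" "f (g y) = y" if "y \<in> Y" for y
    using that Y(2) unfolding g_def by (auto simp: inv_into_into f_inv_into_f)
  have preimage: "{h \<in> carrier H. f h \<in> f (g y) <#\<^bsub>G\<^esub> U} \<subseteq> g y <# P" if "y \<in> Y" for y
    using f.inj_on_preimage_l_coset_subset[OF inj PU(2) g(1)[OF that] _ PU(5)]
      openin_subset[OF PU(3)] topological_group_topspace[OF tgG] by simp
  have "compactin TH (\<Union>y\<in>Y. g y <# P)"
    using Y(1) compactin_l_coset[OF tgH g(1) PU(1)] by (intro compactin_Union) auto
  moreover have "{h \<in> carrier H. f h \<in> Q} \<subseteq> (\<Union>y\<in>Y. g y <# P)"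
  proof
    fix h assume h: "h \<in> {h \<in> carrier H. f h \<in> Q}"
    then obtain y where y: "y \<in> Y" "f h \<in> y <#\<^bsub>G\<^esub> U"
      using Y(3) by blast
    then have "h \<in> g y <# P"
      using preimage[OF y(1)] g(2)[OF y(1)] h by auto
    then show "h \<in> (\<Union>y\<in>Y. g y <# P)"
      using y(1) by blast
  qed
  ultimately show "\<exists>E. compactin TH E \<and> {h \<in> carrier H. f h \<in> Q} \<subseteq> E"
    by blast
qed

lemma cocompact_image_compact_coset_space:
  assumes lcG: "lc_group G TG" and gH: "group H" and f: "f \<in> hom H G"
    and cs: "compact_space (coset_topology G TG (f ` carrier H))"
  shows "cocompact_image H G TG f"
proof -
  have tgG: "topological_group G TG" and lc: "locally_compact_space TG"
    using lcG unfolding lc_group_def by auto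
  interpret G: group G using topological_group_is_group[OF tgG] .
  interpret f: group_hom H G f
    using gH f by (simp add: group_hom_def group_hom_axioms_def G.is_group)
  note sub = f.img_is_subgroup
  have "compactin (coset_topology G TG (f ` carrier H)) (rcosets\<^bsub>G\<^esub> (f ` carrier H))"
    using cs topspace_coset_topology[OF G.is_group sub topological_group_topspace[OF tgG]]
    unfolding compact_space_def by simp
  then obtain D where "compactin TG D"
    "\<And>x. x \<in> carrier G \<Longrightarrow> f ` carrier H #>\<^bsub>G\<^esub> x \<in> rcosets\<^bsub>G\<^esub> (f ` carrier H) \<Longrightarrow>
       x \<in> f ` carrier H <#>\<^bsub>G\<^esub> D"
    using compactin_coset_topology_lift[OF tgG lc sub] by blast
  then show ?thesis
    unfolding cocompact_image_def using G.rcosetsI subgroup.subset[OF sub] by blast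
qed

theorem orbital_maps_rough_similar_closed_cocompact:
  fixes H :: "('h,'a) monoid_scheme" and G :: "('g,'b) monoid_scheme"
  assumes lcH: "lc_group H TH" and cg: "compactly_generated H TH"
    and hyp: "orbital_maps_rough_similar H TH TYPE('x) TYPE('y)"
    and lcG: "lc_group G TG" and f: "f \<in> hom H G" "continuous_map TH TG f"
    and inj: "inj_on f (carrier H)" and closed: "closedin TG (f ` carrier H)"
    and cs: "compact_space (coset_topology G TG (f ` carrier H))"
  shows "orbital_maps_rough_similar G TG TYPE('x) TYPE('y)"
proof -
  have tgH: "topological_group H TH" and haus: "Hausdorff_space TH"
    and tgG: "topological_group G TG"
    using lcH lcG unfolding lc_group_def by auto
  show ?thesis
    using orbital_maps_rough_similar_transfer[OF hyp topological_group_is_group[OF tgH]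
        topological_group_is_group[OF tgG] topological_group_topspace[OF tgG] haus f
        relatively_compact_preimages_closed_embedding[OF tgH cg lcG f inj closed]
        cocompact_image_compact_coset_space[OF lcG topological_group_is_group[OF tgH] f(1) cs]] .
qed

theorem proposition6p1:
  fixes H :: "'h monoid" and TH :: "'h topology"
  assumes "lc_group H TH" and "compactly_generated H TH"
    and hyp: "orbital_maps_rough_similar H TH TYPE('x) TYPE('y)"
  shows "(\<forall>K. K \<subseteq> carrier H \<and> compactin TH K \<and> K \<lhd> H \<longrightarrow>
            orbital_maps_rough_similar (H Mod K) (coset_topology H TH K) TYPE('x) TYPE('y))
       \<and> (\<forall>(G :: 'g monoid) TG f.
            lc_group G TG \<and> f \<in> hom H G \<and> inj_on f (carrier H) \<and> continuous_map TH TG f \<and>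
            closedin TG (f ` carrier H) \<and> compact_space (coset_topology G TG (f ` carrier H)) \<longrightarrow>
            orbital_maps_rough_similar G TG TYPE('x) TYPE('y))"
  using orbital_maps_rough_similar_quotient[OF assms(1) hyp]
    orbital_maps_rough_similar_closed_cocompact[OF assms]
  by blast

end
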